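(* Let $D_M>0$ be a constant such that for every $n\in\mathbb N$ and all $x_1,\dots,x_n\in T^*$ with pairwise disjoint supports and $\min\operatorname{supp}(x_k)\ge n$ one has $\|\sum_kx_k\|_{T^*}\le D_M\max_k\|x_k\|_{T^*}$. Let $k\in\mathbb N$ and $k=n_0<n_1<\dots<n_k$. For $j=0,1,\dots,k$ put $R_j=(k,n_j]\times[1,n_j]\subset\mathbb N^2$, and for $j=1,\dots,k$ let $z_j\in P_{R_j\setminus R_{j-1}}(T^*(T^* ))$ with $\|z_j\|\le1$. Then for all scalars $(a_j)_{j=1}^k$, $$\Big\|\sum_{j=1}^ka_jz_j\Big\|\le 3D_M\max_{1\le j\le k}|a_j|.$$
   Context: $T^*$ is the dual of Tsirelson's space $T$ (completion of $c_{00}$ under $\|x\|_T=\max\{\|x\|_\infty,\frac12\sup\sum_{j=1}^n\|E_j(x)\|_T\}$, supremum over $n$ and finite sets $n\le E_1<\dots<E_n$), with $1$-unconditional basis $(e_j)$. $T^*(T^* )$ is the space of sequences $(x_i)$ in $T^*$ with $\sum\|x_i\|e_i$ convergent in $T^*$, normed by $\|(x_i)\|=\|\sum_i\|x_i\|e_i\|_{T^*}$. The $i$-th component is the $i$-th copy of $T^*$, with basis $(e^{(i)}_s)_s$. For $R\subset\mathbb N^2$, $P_R$ is the norm-one projection $\sum_{i,s}a_{(i,s)}e^{(i)}_s\mapsto\sum_{(i,s)\in R}a_{(i,s)}e^{(i)}_s$ (first coordinate = component index $i$, second = basis index $s$). Intervals are in $\mathbb N$. *)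

theory Defs
  imports Complex_Main
begin

(* Sequences are functions nat => real; the natural numbers used as indices are
   1,2,3,...; coordinate 0 is unused and required to be 0. Real scalars. *)

definition supp :: "(nat \<Rightarrow> real) \<Rightarrow> nat set" where
  "supp x = {i. x i \<noteq> 0}"

definition fin_supp :: "(nat \<Rightarrow> real) \<Rightarrow> bool" where
  "fin_supp x \<longleftrightarrow> finite (supp x) \<and> x 0 = 0"

definition restr :: "nat set \<Rightarrow> (nat \<Rightarrow> real) \<Rightarrow> nat \<Rightarrow> real" where
  "restr E x = (\<lambda>i. if i \<in> E then x i else 0)"

definition supnorm :: "(nat \<Rightarrow> real) \<Rightarrow> real" where
  "supnorm x = Sup (range (\<lambda>i. \<bar>x i\<bar>))"

definition admissible :: "nat set list \<Rightarrow> bool" where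
  "admissible Es \<longleftrightarrow> Es \<noteq> [] \<and> (\<forall>E\<in>set Es. finite E \<and> E \<noteq> {}) \<and>
     length Es \<le> Min (hd Es) \<and>
     (\<forall>j. Suc j < length Es \<longrightarrow> Max (Es ! j) < Min (Es ! Suc j))"

(* iterates of the implicit Tsirelson norm equation; the Tsirelson norm is their supremum *)
fun tnorm_iter :: "nat \<Rightarrow> (nat \<Rightarrow> real) \<Rightarrow> real" where
  "tnorm_iter 0 x = supnorm x"
| "tnorm_iter (Suc m) x = max (supnorm x)
     (1/2 * Sup {sum_list (map (\<lambda>E. tnorm_iter m (restr E x)) Es) | Es. admissible Es})"

definition tnorm :: "(nat \<Rightarrow> real) \<Rightarrow> real" where
  "tnorm x = Sup (range (\<lambda>m. tnorm_iter m x))"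

definition dual_set :: "(nat \<Rightarrow> real) \<Rightarrow> real set" where
  "dual_set y = {\<bar>\<Sum>i\<in>supp x. y i * x i\<bar> | x. fin_supp x \<and> tnorm x \<le> 1}"

definition in_Tstar :: "(nat \<Rightarrow> real) \<Rightarrow> bool" where
  "in_Tstar y \<longleftrightarrow> y 0 = 0 \<and> bdd_above (dual_set y)"

definition tsnorm :: "(nat \<Rightarrow> real) \<Rightarrow> real" where
  "tsnorm y = Sup (dual_set y)"

(* TT = T-star(T-star): z i s = coefficient of e^{(i)}_s *)
definition TTspace :: "(nat \<Rightarrow> nat \<Rightarrow> real) set" where
  "TTspace = {z. z 0 = (\<lambda>s. 0) \<and> (\<forall>i. in_Tstar (z i)) \<and> in_Tstar (\<lambda>i. tsnorm (z i))}"

definition ttnorm :: "(nat \<Rightarrow> nat \<Rightarrow> real) \<Rightarrow> real" where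
  "ttnorm z = tsnorm (\<lambda>i. tsnorm (z i))"

definition projR :: "(nat \<times> nat) set \<Rightarrow> (nat \<Rightarrow> nat \<Rightarrow> real) \<Rightarrow> nat \<Rightarrow> nat \<Rightarrow> real" where
  "projR R z = (\<lambda>i s. if (i, s) \<in> R then z i s else 0)"

definition Rset :: "nat \<Rightarrow> nat \<Rightarrow> (nat \<times> nat) set" where
  "Rset k N = {(i, s). k < i \<and> i \<le> N \<and> 1 \<le> s \<and> s \<le> N}"

end

theory Submission
  imports Defs
begin

text \<open>
  Put \<open>P\<^sub>j = (n\<^sub>j\<^sub>-\<^sub>1, n\<^sub>j]\<close> and \<open>v\<^sub>j(i) = \<parallel>z\<^sub>j(i)\<parallel>\<close>. Because \<open>z\<^sub>j\<close> lives on \<open>R\<^sub>j - R\<^sub>j\<^sub>-\<^sub>1\<close>, its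
  \<open>i\<close>-th component is supported on the block \<open>P\<^sub>j\<close> unless \<open>i \<in> P\<^sub>j\<close>, which happens for at most
  one \<open>j\<close>. The blocks \<open>P\<^sub>1 < \<dots> < P\<^sub>k\<close> form an admissible family (\<open>min P\<^sub>1 = k + 1\<close>), so the
  lower estimate \<open>\<Sum>\<^sub>j \<parallel>P\<^sub>j x\<parallel>\<^sub>T \<le> 2 \<parallel>x\<parallel>\<^sub>T\<close> dualises to \<open>\<parallel>\<Sum>\<^sub>j y\<^sub>j\<parallel> \<le> 2 max\<^sub>j \<parallel>y\<^sub>j\<parallel>\<close> for
  functionals \<open>y\<^sub>j\<close> supported on \<open>P\<^sub>j\<close>. Hence the \<open>i\<close>-th component of \<open>\<Sum>\<^sub>j a\<^sub>j z\<^sub>j\<close> has norm at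
  most \<open>3 max\<^sub>j |a\<^sub>j| M(i)\<close>, where \<open>M = max\<^sub>j v\<^sub>j\<close> pointwise. Splitting \<open>M\<close> according to which
  \<open>v\<^sub>j\<close> attains the maximum writes it as a sum of \<open>k\<close> disjointly supported vectors of norm at
  most 1 supported beyond \<open>k\<close>, so \<open>\<parallel>M\<parallel> \<le> D\<close>; the lattice property of \<open>T\<^sup>*\<close> concludes.
\<close>

section \<open>Tsirelson's norm\<close>

definition l1_norm :: "(nat \<Rightarrow> real) \<Rightarrow> real" where
  "l1_norm x = (\<Sum>i\<in>supp x. \<bar>x i\<bar>)"

definition admissible_sums :: "nat \<Rightarrow> (nat \<Rightarrow> real) \<Rightarrow> real set" where
  "admissible_sums m x = {sum_list (map (\<lambda>E. tnorm_iter m (restr E x)) Es) | Es. admissible Es}"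

lemma tnorm_iter_Suc_eq:
  "tnorm_iter (Suc m) x = max (supnorm x) (1/2 * Sup (admissible_sums m x))"
  by (simp add: admissible_sums_def)

declare tnorm_iter.simps(2) [simp del]

lemma admissible_sumsI:
  "admissible Es \<Longrightarrow> sum_list (map (\<lambda>E. tnorm_iter m (restr E x)) Es) \<in> admissible_sums m x"
  unfolding admissible_sums_def by blast

lemma admissible_sums_nonempty: "admissible_sums m x \<noteq> {}"
proof -
  have "admissible [{1}]" by (simp add: admissible_def)
  then show ?thesis using admissible_sumsI by blast
qed

lemma supp_restr: "supp (restr E x) = supp x \<inter> E"
  by (auto simp: supp_def restr_def)

lemma fin_supp_restr: "fin_supp x \<Longrightarrow> fin_supp (restr E x)"
  unfolding fin_supp_def supp_restr by (auto simp: restr_def)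

lemma abs_le_l1_norm: "fin_supp x \<Longrightarrow> \<bar>x i\<bar> \<le> l1_norm x"
  unfolding l1_norm_def fin_supp_def
  by (cases "i \<in> supp x") (auto intro: member_le_sum sum_nonneg simp: supp_def)

lemma bdd_above_range_abs: "fin_supp x \<Longrightarrow> bdd_above (range (\<lambda>i. \<bar>x i\<bar>))"
  using abs_le_l1_norm by (auto simp: bdd_above_def)

lemma abs_le_supnorm: "fin_supp x \<Longrightarrow> \<bar>x i\<bar> \<le> supnorm x"
  unfolding supnorm_def by (rule cSup_upper[OF _ bdd_above_range_abs]) auto

lemma supnorm_le_l1_norm: "fin_supp x \<Longrightarrow> supnorm x \<le> l1_norm x"
  unfolding supnorm_def by (rule cSup_least) (auto intro: abs_le_l1_norm)

lemma admissible_less: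
  assumes "admissible Es" "i < j" "j < length Es" "a \<in> Es ! i" "b \<in> Es ! j"
  shows "a < b"
proof -
  have block: "finite (Es ! l) \<and> Es ! l \<noteq> {}" if "l < length Es" for l
    using assms(1) that nth_mem by (auto simp: admissible_def)
  have step: "Max (Es ! l) < Min (Es ! Suc l)" if "Suc l < length Es" for l
    using assms(1) that by (auto simp: admissible_def)
  have Max_mono: "Max (Es ! l) \<le> Max (Es ! Suc l)" if "l \<in> {..<j - 1}" for l
  proof -
    have l: "Suc l < length Es" using that assms(3) by auto
    have "Min (Es ! Suc l) \<in> Es ! Suc l"
      using block[OF l] by (intro Min_in) auto
    then have "Min (Es ! Suc l) \<le> Max (Es ! Suc l)"
      using block[OF l] by (intro Max_ge) auto
    then show ?thesis using step[OF l] by linarith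
  qed
  have "Max (Es ! i) \<le> Max (Es ! (j - 1))"
    by (rule lift_Suc_mono_le_ivl[where f = "\<lambda>l. Max (Es ! l)" and N = "{..<j - 1}", OF Max_mono]) (use assms(2) in auto)
  moreover have "a \<le> Max (Es ! i)" "Min (Es ! j) \<le> b"
    using assms(2-5) block[of i] block[of j] by auto
  moreover have "Max (Es ! (j - 1)) < Min (Es ! j)"
    using step[of "j - 1"] assms(2,3) by simp
  ultimately show ?thesis by linarith
qed

lemma admissible_disjoint:
  assumes "admissible Es" "i < length Es" "j < length Es" "i \<noteq> j"
  shows "Es ! i \<inter> Es ! j = {}"
  using admissible_less[OF assms(1), of i j] admissible_less[OF assms(1), of j i] assms(2-4)
  by (cases "i < j") fastforce+

lemma l1_norm_restr: "l1_norm (restr E x) = (\<Sum>i\<in>supp x \<inter> E. \<bar>x i\<bar>)"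
  unfolding l1_norm_def supp_restr by (rule sum.cong) (auto simp: restr_def)

lemma admissible_sum_le_l1_norm:
  assumes "admissible Es" "fin_supp x" "\<And>y. fin_supp y \<Longrightarrow> f y \<le> l1_norm y"
  shows "sum_list (map (\<lambda>E. f (restr E x)) Es) \<le> l1_norm x"
proof -
  have fx: "finite (supp x)" using assms(2) by (simp add: fin_supp_def)
  have "sum_list (map (\<lambda>E. f (restr E x)) Es) \<le> sum_list (map (\<lambda>E. l1_norm (restr E x)) Es)"
    by (rule sum_list_mono) (use assms(2,3) fin_supp_restr in blast)
  also have "\<dots> = (\<Sum>j<length Es. \<Sum>i\<in>supp x \<inter> Es ! j. \<bar>x i\<bar>)"
    by (simp add: sum_list_sum_nth atLeast0LessThan l1_norm_restr)
  also have "\<dots> = (\<Sum>i\<in>(\<Union>j<length Es. supp x \<inter> Es ! j). \<bar>x i\<bar>)"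
    using admissible_disjoint[OF assms(1)] fx by (intro sum.UNION_disjoint[symmetric]) auto
  also have "\<dots> \<le> l1_norm x"
    unfolding l1_norm_def using fx by (intro sum_mono2) auto
  finally show ?thesis .
qed

lemma tnorm_iter_le_l1_norm: "fin_supp x \<Longrightarrow> tnorm_iter m x \<le> l1_norm x"
proof (induction m arbitrary: x)
  case 0
  then show ?case by (simp add: supnorm_le_l1_norm)
next
  case (Suc m)
  have "Sup (admissible_sums m x) \<le> l1_norm x"
  proof (rule cSup_least[OF admissible_sums_nonempty])
    fix s assume "s \<in> admissible_sums m x"
    then obtain Es where "admissible Es" "s = sum_list (map (\<lambda>E. tnorm_iter m (restr E x)) Es)"
      unfolding admissible_sums_def by blast
    then show "s \<le> l1_norm x"
      using admissible_sum_le_l1_norm[OF _ Suc.prems Suc.IH] by simp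
  qed
  moreover have "0 \<le> l1_norm x"
    using abs_le_l1_norm[OF Suc.prems, of 0] by linarith
  ultimately show ?case
    unfolding tnorm_iter_Suc_eq using supnorm_le_l1_norm[OF Suc.prems] by simp
qed

lemma bdd_above_admissible_sums: "fin_supp x \<Longrightarrow> bdd_above (admissible_sums m x)"
  unfolding admissible_sums_def
  using admissible_sum_le_l1_norm[where f = "tnorm_iter m", OF _ _ tnorm_iter_le_l1_norm]
  by (intro bdd_aboveI[of _ "l1_norm x"]) auto

lemma supnorm_le_tnorm_iter: "supnorm x \<le> tnorm_iter m x"
  by (cases m) (simp_all add: tnorm_iter_Suc_eq)

lemma tnorm_iter_le_tnorm: "fin_supp x \<Longrightarrow> tnorm_iter m x \<le> tnorm x"
  unfolding tnorm_def using tnorm_iter_le_l1_norm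
  by (intro cSup_upper) (auto simp: bdd_above_def)

lemma tnorm_le_l1_norm: "fin_supp x \<Longrightarrow> tnorm x \<le> l1_norm x"
  unfolding tnorm_def by (rule cSup_least) (auto simp: tnorm_iter_le_l1_norm)

lemma abs_le_tnorm: "fin_supp x \<Longrightarrow> \<bar>x i\<bar> \<le> tnorm x"
  using abs_le_supnorm[of x i] supnorm_le_tnorm_iter[of x 0] tnorm_iter_le_tnorm[of x 0] by linarith

lemma tnorm_nonneg: "fin_supp x \<Longrightarrow> 0 \<le> tnorm x"
  using abs_le_tnorm[of x 0] by simp

lemma tnorm_iter_le_Suc: "fin_supp x \<Longrightarrow> tnorm_iter m x \<le> tnorm_iter (Suc m) x"
proof (induction m arbitrary: x)
  case 0
  then show ?case by (simp add: tnorm_iter_Suc_eq)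
next
  case (Suc m)
  have "Sup (admissible_sums m x) \<le> Sup (admissible_sums (Suc m) x)"
  proof (rule cSup_mono[OF admissible_sums_nonempty bdd_above_admissible_sums[OF Suc.prems]])
    fix s assume "s \<in> admissible_sums m x"
    then obtain Es where Es: "admissible Es" "s = sum_list (map (\<lambda>E. tnorm_iter m (restr E x)) Es)"
      unfolding admissible_sums_def by blast
    have "s \<le> sum_list (map (\<lambda>E. tnorm_iter (Suc m) (restr E x)) Es)"
      unfolding Es(2) by (rule sum_list_mono) (use Suc.IH fin_supp_restr Suc.prems in blast)
    then show "\<exists>t\<in>admissible_sums (Suc m) x. s \<le> t"
      using admissible_sumsI[OF Es(1)] by blast
  qed
  then show ?case
    unfolding tnorm_iter_Suc_eq[of "Suc m"] tnorm_iter_Suc_eq[of m] by auto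
qed

lemma tnorm_iter_tendsto: "fin_supp x \<Longrightarrow> (\<lambda>m. tnorm_iter m x) \<longlonglongrightarrow> tnorm x"
  unfolding tnorm_def using tnorm_iter_le_l1_norm
  by (intro LIMSEQ_incseq_SUP) (auto simp: bdd_above_def intro: incseq_SucI tnorm_iter_le_Suc)

text \<open>The lower estimate of Tsirelson's norm, obtained by passing to the limit in the recursion
  for the iterates.\<close>

lemma admissible_sum_tnorm_le:
  assumes "admissible Es" "fin_supp x"
  shows "sum_list (map (\<lambda>E. tnorm (restr E x)) Es) \<le> 2 * tnorm x"
proof (rule LIMSEQ_le_const2)
  show "(\<lambda>m. sum_list (map (\<lambda>E. tnorm_iter m (restr E x)) Es))
          \<longlonglongrightarrow> sum_list (map (\<lambda>E. tnorm (restr E x)) Es)"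
    by (induction Es) (auto intro!: tendsto_add tnorm_iter_tendsto fin_supp_restr assms(2))
  show "\<exists>N. \<forall>m\<ge>N. sum_list (map (\<lambda>E. tnorm_iter m (restr E x)) Es) \<le> 2 * tnorm x"
  proof (intro exI allI impI)
    fix m
    have "sum_list (map (\<lambda>E. tnorm_iter m (restr E x)) Es) \<le> Sup (admissible_sums m x)"
      by (rule cSup_upper[OF admissible_sumsI[OF assms(1)] bdd_above_admissible_sums[OF assms(2)]])
    also have "\<dots> \<le> 2 * tnorm_iter (Suc m) x"
      unfolding tnorm_iter_Suc_eq by linarith
    also have "\<dots> \<le> 2 * tnorm x"
      using tnorm_iter_le_tnorm[OF assms(2)] by simp
    finally show "sum_list (map (\<lambda>E. tnorm_iter m (restr E x)) Es) \<le> 2 * tnorm x" .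
  qed
qed

lemma tnorm_iter_abs_eq: "(\<And>i. \<bar>x i\<bar> = \<bar>y i\<bar>) \<Longrightarrow> tnorm_iter m x = tnorm_iter m y"
proof (induction m arbitrary: x y)
  case 0
  then show ?case by (simp add: supnorm_def)
next
  case (Suc m)
  have "tnorm_iter m (restr E x) = tnorm_iter m (restr E y)" for E
    by (rule Suc.IH) (simp add: restr_def Suc.prems)
  then have "admissible_sums m x = admissible_sums m y"
    by (simp add: admissible_sums_def)
  then show ?case
    using Suc.prems by (simp add: tnorm_iter_Suc_eq supnorm_def)
qed

lemma tnorm_abs_eq: "(\<And>i. \<bar>x i\<bar> = \<bar>y i\<bar>) \<Longrightarrow> tnorm x = tnorm y"
  unfolding tnorm_def using tnorm_iter_abs_eq by metis

lemma supnorm_scale_le: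
  assumes "fin_supp x" "0 \<le> c"
  shows "supnorm (\<lambda>i. c * x i) \<le> c * supnorm x"
  unfolding supnorm_def
  using assms cSup_upper[OF _ bdd_above_range_abs[OF assms(1)]]
  by (intro cSup_least) (auto simp: abs_mult intro: mult_left_mono)

lemma tnorm_iter_scale_le:
  "fin_supp x \<Longrightarrow> 0 \<le> c \<Longrightarrow> tnorm_iter m (\<lambda>i. c * x i) \<le> c * tnorm_iter m x"
proof (induction m arbitrary: x)
  case 0
  then show ?case by (simp add: supnorm_scale_le)
next
  case (Suc m)
  have "Sup (admissible_sums m (\<lambda>i. c * x i)) \<le> c * Sup (admissible_sums m x)"
  proof (rule cSup_least[OF admissible_sums_nonempty])
    fix s assume "s \<in> admissible_sums m (\<lambda>i. c * x i)"
    then obtain Es where Es: "admissible Es"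
      "s = sum_list (map (\<lambda>E. tnorm_iter m (restr E (\<lambda>i. c * x i))) Es)"
      unfolding admissible_sums_def by blast
    have "restr E (\<lambda>i. c * x i) = (\<lambda>i. c * restr E x i)" for E
      by (auto simp: restr_def)
    then have "s \<le> sum_list (map (\<lambda>E. c * tnorm_iter m (restr E x)) Es)"
      unfolding Es(2) using Suc.IH fin_supp_restr Suc.prems by (intro sum_list_mono) auto
    also have "\<dots> = c * sum_list (map (\<lambda>E. tnorm_iter m (restr E x)) Es)"
      by (simp add: sum_list_const_mult)
    also have "\<dots> \<le> c * Sup (admissible_sums m x)"
      using Suc.prems admissible_sumsI[OF Es(1)] bdd_above_admissible_sums
      by (intro mult_left_mono cSup_upper) auto
    finally show "s \<le> c * Sup (admissible_sums m x)" .
  qed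
  then show ?case
    using Suc.prems supnorm_scale_le[OF Suc.prems]
    by (auto simp: tnorm_iter_Suc_eq max_mult_distrib_left)
qed

lemma tnorm_scale_le:
  assumes "fin_supp x" "0 \<le> c"
  shows "tnorm (\<lambda>i. c * x i) \<le> c * tnorm x"
  unfolding tnorm_def[of "\<lambda>i. c * x i"]
proof (rule cSup_least)
  fix t assume "t \<in> range (\<lambda>m. tnorm_iter m (\<lambda>i. c * x i))"
  then obtain m where "t = tnorm_iter m (\<lambda>i. c * x i)" by blast
  also have "\<dots> \<le> c * tnorm_iter m x" by (rule tnorm_iter_scale_le[OF assms])
  also have "\<dots> \<le> c * tnorm x" using tnorm_iter_le_tnorm[OF assms(1)] assms(2) by (rule mult_left_mono)
  finally show "t \<le> c * tnorm x" .
qed simp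

section \<open>The dual space \<open>T\<^sup>*\<close>\<close>

definition dual_pair :: "(nat \<Rightarrow> real) \<Rightarrow> (nat \<Rightarrow> real) \<Rightarrow> real" where
  "dual_pair y x = (\<Sum>i\<in>supp x. y i * x i)"

lemma dual_set_eq: "dual_set y = {\<bar>dual_pair y x\<bar> | x. fin_supp x \<and> tnorm x \<le> 1}"
  by (simp add: dual_set_def dual_pair_def)

lemma dual_pair_add: "dual_pair (\<lambda>i. y i + w i) x = dual_pair y x + dual_pair w x"
  by (simp add: dual_pair_def distrib_right sum.distrib)

lemma dual_pair_scale: "dual_pair (\<lambda>i. c * y i) x = c * dual_pair y x"
  by (simp add: dual_pair_def sum_distrib_left mult.assoc)

lemma dual_pair_sum: "dual_pair (\<lambda>i. \<Sum>j\<in>J. y j i) x = (\<Sum>j\<in>J. dual_pair (y j) x)"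
  by (simp add: dual_pair_def sum_distrib_right sum.swap[of _ J])

lemma dual_pair_restr:
  assumes "fin_supp x" "supp y \<subseteq> E"
  shows "dual_pair y x = dual_pair y (restr E x)"
proof -
  have "dual_pair y x = (\<Sum>i\<in>supp x \<inter> E. y i * x i)"
    unfolding dual_pair_def using assms by (intro sum.mono_neutral_right) (auto simp: fin_supp_def supp_def)
  also have "\<dots> = dual_pair y (restr E x)"
    unfolding dual_pair_def supp_restr by (rule sum.cong) (auto simp: restr_def)
  finally show ?thesis .
qed

lemma zero_in_dual_set: "0 \<in> dual_set y"
proof -
  have "fin_supp (\<lambda>_. 0)" "l1_norm (\<lambda>_. 0) = 0"
    by (simp_all add: fin_supp_def l1_norm_def supp_def)
  then have "tnorm (\<lambda>_. 0) \<le> 1"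
    using tnorm_le_l1_norm by fastforce
  then show ?thesis
    unfolding dual_set_eq using \<open>fin_supp (\<lambda>_. 0)\<close> by (force simp: dual_pair_def)
qed

lemma tsnorm_nonneg: "in_Tstar y \<Longrightarrow> 0 \<le> tsnorm y"
  unfolding tsnorm_def in_Tstar_def by (intro cSup_upper zero_in_dual_set) auto

lemma abs_dual_pair_le_tsnorm:
  "in_Tstar y \<Longrightarrow> fin_supp x \<Longrightarrow> tnorm x \<le> 1 \<Longrightarrow> \<bar>dual_pair y x\<bar> \<le> tsnorm y"
  unfolding tsnorm_def in_Tstar_def dual_set_eq by (intro cSup_upper) auto

lemma abs_dual_pair_le:
  assumes y: "in_Tstar y" and x: "fin_supp x"
  shows "\<bar>dual_pair y x\<bar> \<le> tsnorm y * tnorm x"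
proof (cases "tnorm x = 0")
  case True
  then have "supp x = {}"
    using abs_le_tnorm[OF x] by (fastforce simp: supp_def)
  then show ?thesis
    using True by (simp add: dual_pair_def)
next
  case False
  then have t: "0 < tnorm x" using tnorm_nonneg[OF x] by linarith
  define x' where "x' = (\<lambda>i. (1 / tnorm x) * x i)"
  have "fin_supp x'"
    using x by (auto simp: fin_supp_def supp_def x'_def elim: finite_subset[rotated])
  moreover have "tnorm x' \<le> 1"
    using tnorm_scale_le[OF x, of "1 / tnorm x"] t by (simp add: x'_def)
  ultimately have "\<bar>dual_pair y x'\<bar> \<le> tsnorm y"
    by (rule abs_dual_pair_le_tsnorm[OF y])
  moreover have "dual_pair y x' = dual_pair y x / tnorm x"
    using t by (simp add: x'_def dual_pair_def supp_def sum_divide_distrib)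
  ultimately show ?thesis
    using t by (simp add: abs_div pos_divide_le_eq)
qed

lemma in_Tstar_tsnorm_leI:
  assumes "y 0 = 0" "\<And>x. fin_supp x \<Longrightarrow> tnorm x \<le> 1 \<Longrightarrow> \<bar>dual_pair y x\<bar> \<le> c"
  shows "in_Tstar y \<and> tsnorm y \<le> c"
proof
  show "in_Tstar y"
    unfolding in_Tstar_def dual_set_eq using assms by (auto intro!: bdd_aboveI[of _ c])
  show "tsnorm y \<le> c"
    unfolding tsnorm_def dual_set_eq using assms(2) zero_in_dual_set[unfolded dual_set_eq]
    by (intro cSup_least) auto
qed

lemma tsnorm_zero: "in_Tstar (\<lambda>_. 0) \<and> tsnorm (\<lambda>_. 0) = 0"
  using in_Tstar_tsnorm_leI[of "\<lambda>_. 0" 0] tsnorm_nonneg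
  by (force simp: dual_pair_def)

lemma in_Tstar_add:
  assumes "in_Tstar y" "in_Tstar w"
  shows "in_Tstar (\<lambda>i. y i + w i) \<and> tsnorm (\<lambda>i. y i + w i) \<le> tsnorm y + tsnorm w"
proof (rule in_Tstar_tsnorm_leI)
  show "y 0 + w 0 = 0" using assms by (simp add: in_Tstar_def)
  fix x assume x: "fin_supp x" "tnorm x \<le> 1"
  show "\<bar>dual_pair (\<lambda>i. y i + w i) x\<bar> \<le> tsnorm y + tsnorm w"
    using abs_dual_pair_le_tsnorm[OF assms(1) x] abs_dual_pair_le_tsnorm[OF assms(2) x]
    unfolding dual_pair_add by linarith
qed

lemma in_Tstar_sum:
  "finite J \<Longrightarrow> (\<And>j. j \<in> J \<Longrightarrow> in_Tstar (y j)) \<Longrightarrow> in_Tstar (\<lambda>i. \<Sum>j\<in>J. y j i)"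
proof (induction J rule: finite_induct)
  case empty
  then show ?case using tsnorm_zero by simp
next
  case (insert j J)
  then have "in_Tstar (\<lambda>i. y j i + (\<Sum>j\<in>J. y j i))"
    using in_Tstar_add[of "y j" "\<lambda>i. \<Sum>j\<in>J. y j i"] by simp
  then show ?case using insert.hyps by simp
qed

lemma in_Tstar_scale:
  assumes "in_Tstar y"
  shows "in_Tstar (\<lambda>i. c * y i) \<and> tsnorm (\<lambda>i. c * y i) \<le> \<bar>c\<bar> * tsnorm y"
proof (rule in_Tstar_tsnorm_leI)
  show "c * y 0 = 0" using assms by (simp add: in_Tstar_def)
  fix x assume "fin_supp x" "tnorm x \<le> 1"
  then show "\<bar>dual_pair (\<lambda>i. c * y i) x\<bar> \<le> \<bar>c\<bar> * tsnorm y"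
    unfolding dual_pair_scale abs_mult
    using abs_dual_pair_le_tsnorm[OF assms] by (simp add: mult_left_mono)
qed

text \<open>Since the basis of \<open>T\<close> is 1-unconditional, testing \<open>u\<close> against \<open>x\<close> is dominated by testing \<open>w\<close>
  against \<open>x\<close> with its signs aligned to those of \<open>w\<close>.\<close>

lemma in_Tstar_abs_le:
  assumes w: "in_Tstar w" and le: "\<And>i. \<bar>u i\<bar> \<le> \<bar>w i\<bar>" and "u 0 = 0"
  shows "in_Tstar u \<and> tsnorm u \<le> tsnorm w"
proof (rule in_Tstar_tsnorm_leI)
  show "u 0 = 0" by fact
  fix x assume x: "fin_supp x" "tnorm x \<le> 1"
  define x' where "x' = (\<lambda>i. if 0 \<le> w i then \<bar>x i\<bar> else - \<bar>x i\<bar>)"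
  have abs_x': "\<bar>x' i\<bar> = \<bar>x i\<bar>" for i by (simp add: x'_def)
  have supp_x': "supp x' = supp x" by (auto simp: supp_def x'_def)
  have "fin_supp x'" using x(1) supp_x' abs_x'[of 0] by (simp add: fin_supp_def)
  moreover have "tnorm x' \<le> 1" using tnorm_abs_eq[OF abs_x'] x(2) by simp
  ultimately have "\<bar>dual_pair w x'\<bar> \<le> tsnorm w" by (rule abs_dual_pair_le_tsnorm[OF w])
  moreover have "\<bar>dual_pair u x\<bar> \<le> dual_pair w x'"
  proof -
    have "\<bar>dual_pair u x\<bar> \<le> (\<Sum>i\<in>supp x. \<bar>u i\<bar> * \<bar>x i\<bar>)"
      unfolding dual_pair_def by (rule order_trans[OF sum_abs]) (simp add: abs_mult)
    also have "\<dots> \<le> (\<Sum>i\<in>supp x. \<bar>w i\<bar> * \<bar>x i\<bar>)"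
      by (intro sum_mono mult_right_mono le) simp
    also have "\<dots> = dual_pair w x'"
      unfolding dual_pair_def supp_x' by (intro sum.cong) (auto simp: x'_def)
    finally show ?thesis .
  qed
  ultimately show "\<bar>dual_pair u x\<bar> \<le> tsnorm w" by linarith
qed

section \<open>Block estimates in \<open>T\<^sup>*(T\<^sup>*)\<close>\<close>

lemma TTspace_projR:
  assumes "w \<in> TTspace"
  shows "projR R w \<in> TTspace"
proof -
  have w0: "w 0 = (\<lambda>_. 0)" and wi: "\<And>i. in_Tstar (w i)" and wn: "in_Tstar (\<lambda>i. tsnorm (w i))"
    using assms by (auto simp: TTspace_def)
  have z0: "projR R w 0 = (\<lambda>_. 0)"
    using w0 by (auto simp: projR_def)
  have component: "in_Tstar (projR R w i) \<and> tsnorm (projR R w i) \<le> tsnorm (w i)" for i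
  proof (rule in_Tstar_abs_le[OF wi])
    show "\<bar>projR R w i s\<bar> \<le> \<bar>w i s\<bar>" for s by (simp add: projR_def)
    show "projR R w i 0 = 0" using wi[of i] by (simp add: projR_def in_Tstar_def)
  qed
  have "in_Tstar (\<lambda>i. tsnorm (projR R w i))"
  proof (rule conjunct1[OF in_Tstar_abs_le[OF wn]])
    show "\<bar>tsnorm (projR R w i)\<bar> \<le> \<bar>tsnorm (w i)\<bar>" for i
      using component[of i] tsnorm_nonneg[of "projR R w i"] by simp
    show "tsnorm (projR R w 0) = 0" using z0 tsnorm_zero by simp
  qed
  then show ?thesis
    using z0 component by (simp add: TTspace_def)
qed

lemma projR_Rset_diff:
  assumes "z \<in> projR (Rset k N - Rset k N') ` TTspace"
  shows "z \<in> TTspace" and "z i s \<noteq> 0 \<Longrightarrow> k < i \<and> (i \<notin> {N'<..N} \<longrightarrow> s \<in> {N'<..N})"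
proof -
  obtain w where w: "w \<in> TTspace" "z = projR (Rset k N - Rset k N') w"
    using assms by blast
  then show "z \<in> TTspace" by (simp add: TTspace_projR)
  assume "z i s \<noteq> 0"
  then have "(i, s) \<in> Rset k N - Rset k N'"
    using w(2) by (auto simp: projR_def split: if_splits)
  then show "k < i \<and> (i \<notin> {N'<..N} \<longrightarrow> s \<in> {N'<..N})"
    by (auto simp: Rset_def)
qed

lemma admissible_intervals:
  assumes inc: "\<And>j. j < k \<Longrightarrow> n j < n (Suc j)" and "1 \<le> k" "k \<le> Suc (n 0)"
  shows "admissible (map (\<lambda>j. {n (j - 1)<..n j}) [1..<Suc k])"
proof -
  define P where "P j = {n (j - 1)<..n j}" for j
  have nonempty: "n (j - 1) < n j" if "j \<in> {1..k}" for j
    using inc[of "j - 1"] that by (cases j) auto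
  have Min_P: "Min (P j) = Suc (n (j - 1))" and Max_P: "Max (P j) = n j"
    if "j \<in> {1..k}" for j
    using nonempty[OF that] by (auto simp: P_def intro!: Min_eqI Max_eqI)
  have "map P [1..<Suc k] \<noteq> []"
    using \<open>1 \<le> k\<close> by simp
  moreover have "finite E \<and> E \<noteq> {}" if "E \<in> set (map P [1..<Suc k])" for E
    using that nonempty by (auto simp: P_def)
  moreover have "length (map P [1..<Suc k]) \<le> Min (hd (map P [1..<Suc k]))"
    using \<open>1 \<le> k\<close> \<open>k \<le> Suc (n 0)\<close> Min_P[of 1] by (simp add: upt_conv_Cons del: upt_Suc)
  moreover have "Max (map P [1..<Suc k] ! j) < Min (map P [1..<Suc k] ! Suc j)"
    if "Suc j < length (map P [1..<Suc k])" for j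
    using that Max_P[of "Suc j"] Min_P[of "Suc (Suc j)"] by (simp del: upt_Suc)
  ultimately show ?thesis
    unfolding admissible_def P_def[symmetric] by blast
qed

lemma interval_index_unique:
  fixes n :: "nat \<Rightarrow> 'a::linorder"
  assumes inc: "\<And>j. j < k \<Longrightarrow> n j < n (Suc j)" and "1 \<le> k"
  obtains j0 where "j0 \<in> {1..k}" "\<And>j. j \<in> {1..k} \<Longrightarrow> i \<in> {n (j - 1)<..n j} \<Longrightarrow> j = j0"
proof -
  have less: "n j < i" if "j < j'" "j' \<in> {1..k}" "i \<in> {n (j' - 1)<..n j'}" for j j'
  proof -
    have "n j \<le> n (j' - 1)"
      by (rule lift_Suc_mono_le_ivl[where f = n and N = "{..<k}"])
        (use that inc in \<open>auto intro: less_imp_le\<close>)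
    then show ?thesis using that(3) by (auto intro: le_less_trans)
  qed
  show thesis
  proof (cases "\<exists>j0\<in>{1..k}. i \<in> {n (j0 - 1)<..n j0}")
    case True
    then obtain j0 where "j0 \<in> {1..k}" "i \<in> {n (j0 - 1)<..n j0}" by blast
    then show thesis
      using that less by (metis greaterThanAtMost_iff leD linorder_neqE_nat)
  next
    case False
    show thesis by (rule that[of 1]) (use False \<open>1 \<le> k\<close> in auto)
  qed
qed

text \<open>Dual form of the lower estimate of \<open>T\<close>.\<close>

lemma tsnorm_sum_admissible_blocks_le:
  assumes adm: "admissible (map P [1..<Suc k])"
    and y: "\<And>j. j \<in> {1..k} \<Longrightarrow> in_Tstar (y j) \<and> supp (y j) \<subseteq> P j \<and> tsnorm (y j) \<le> c"
  shows "in_Tstar (\<lambda>s. \<Sum>j=1..k. y j s) \<and> tsnorm (\<lambda>s. \<Sum>j=1..k. y j s) \<le> 2 * c"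
proof (rule in_Tstar_tsnorm_leI)
  show "(\<Sum>j=1..k. y j 0) = 0"
    using y by (simp add: in_Tstar_def)
  have "[1..<Suc k] \<noteq> []"
    using adm by (simp add: admissible_def del: upt_Suc)
  then have c: "0 \<le> c"
    using y[of 1] tsnorm_nonneg by force
  fix x assume x: "fin_supp x" "tnorm x \<le> 1"
  have "dual_pair (\<lambda>s. \<Sum>j=1..k. y j s) x = (\<Sum>j=1..k. dual_pair (y j) (restr (P j) x))"
    unfolding dual_pair_sum using dual_pair_restr[OF x(1)] y by (intro sum.cong) auto
  also have "\<bar>\<dots>\<bar> \<le> (\<Sum>j=1..k. c * tnorm (restr (P j) x))"
  proof (rule order_trans[OF sum_abs sum_mono])
    fix j assume j: "j \<in> {1..k}"
    have "\<bar>dual_pair (y j) (restr (P j) x)\<bar> \<le> tsnorm (y j) * tnorm (restr (P j) x)"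
      using y[OF j] fin_supp_restr[OF x(1)] by (intro abs_dual_pair_le) auto
    also have "\<dots> \<le> c * tnorm (restr (P j) x)"
      using y[OF j] tnorm_nonneg[OF fin_supp_restr[OF x(1)]] by (intro mult_right_mono) auto
    finally show "\<bar>dual_pair (y j) (restr (P j) x)\<bar> \<le> c * tnorm (restr (P j) x)" .
  qed
  also have "\<dots> = c * sum_list (map (\<lambda>E. tnorm (restr E x)) (map P [1..<Suc k]))"
    by (simp add: sum_distrib_left sum_set_upt_conv_sum_list_nat[symmetric]
        atLeastLessThanSuc_atLeastAtMost comp_def del: upt_Suc)
  also have "\<dots> \<le> c * (2 * tnorm x)"
    using admissible_sum_tnorm_le[OF adm x(1)] c by (rule mult_left_mono)
  also have "\<dots> \<le> 2 * c"
    using x(2) c by (simp add: mult_left_le)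
  finally show "\<bar>dual_pair (\<lambda>s. \<Sum>j=1..k. y j s) x\<bar> \<le> 2 * c" .
qed

lemma tsnorm_combination_blocks_le:
  assumes adm: "admissible (map P [1..<Suc k])" and j0: "j0 \<in> {1..k}"
    and y: "\<And>j. j \<in> {1..k} \<Longrightarrow> in_Tstar (y j) \<and> tsnorm (y j) \<le> c"
    and blocks: "\<And>j. j \<in> {1..k} \<Longrightarrow> j \<noteq> j0 \<Longrightarrow> supp (y j) \<subseteq> P j"
    and a: "\<And>j. j \<in> {1..k} \<Longrightarrow> \<bar>a j\<bar> \<le> A"
  shows "in_Tstar (\<lambda>s. \<Sum>j=1..k. a j * y j s) \<and> tsnorm (\<lambda>s. \<Sum>j=1..k. a j * y j s) \<le> 3 * A * c"
proof -
  have c: "0 \<le> c" and A: "0 \<le> A"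
    using y[OF j0] tsnorm_nonneg a[OF j0] by force+
  have scaled: "in_Tstar (\<lambda>s. a j * y j s) \<and> tsnorm (\<lambda>s. a j * y j s) \<le> A * c"
    if j: "j \<in> {1..k}" for j
  proof -
    have "\<bar>a j\<bar> * tsnorm (y j) \<le> A * c"
      using y[OF j] a[OF j] tsnorm_nonneg c by (intro mult_mono) auto
    then show ?thesis using in_Tstar_scale[of "y j" "a j"] y[OF j] by auto
  qed
  define y' where "y' j = (if j = j0 then (\<lambda>_. 0) else (\<lambda>s. a j * y j s))" for j
  have tail: "in_Tstar (\<lambda>s. \<Sum>j=1..k. y' j s) \<and> tsnorm (\<lambda>s. \<Sum>j=1..k. y' j s) \<le> 2 * (A * c)"
  proof (rule tsnorm_sum_admissible_blocks_le[OF adm])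
    fix j assume j: "j \<in> {1..k}"
    show "in_Tstar (y' j) \<and> supp (y' j) \<subseteq> P j \<and> tsnorm (y' j) \<le> A * c"
    proof (cases "j = j0")
      case True
      then show ?thesis using tsnorm_zero A c by (simp add: y'_def supp_def)
    next
      case False
      have "supp (\<lambda>s. a j * y j s) \<subseteq> supp (y j)" by (auto simp: supp_def)
      then show ?thesis using False scaled[OF j] blocks[OF j False] by (simp add: y'_def)
    qed
  qed
  have "(\<Sum>j=1..k. a j * y j s) = a j0 * y j0 s + (\<Sum>j=1..k. y' j s)" for s
  proof -
    have "(\<Sum>j=1..k. y' j s) = (\<Sum>j\<in>{1..k} - {j0}. y' j s)"
      using j0 by (simp add: sum.remove y'_def)
    also have "\<dots> = (\<Sum>j\<in>{1..k} - {j0}. a j * y j s)"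
      by (rule sum.cong) (auto simp: y'_def)
    finally show ?thesis
      using j0 by (simp add: sum.remove)
  qed
  then show ?thesis
    using in_Tstar_add[of "\<lambda>s. a j0 * y j0 s" "\<lambda>s. \<Sum>j=1..k. y' j s"] scaled[OF j0] tail by auto
qed

definition disjoint_sum_bound :: "real \<Rightarrow> bool" where
  "disjoint_sum_bound D \<longleftrightarrow>
     (\<forall>(m::nat) (x::nat \<Rightarrow> nat \<Rightarrow> real).
           m \<ge> 1 \<and> (\<forall>l\<in>{1..m}. in_Tstar (x l))
           \<and> (\<forall>l\<in>{1..m}. \<forall>l'\<in>{1..m}. l \<noteq> l' \<longrightarrow> supp (x l) \<inter> supp (x l') = {})
           \<and> (\<forall>l\<in>{1..m}. \<forall>i\<in>supp (x l). m \<le> i)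
           \<longrightarrow> tsnorm (\<lambda>i. \<Sum>l=1..m. x l i) \<le> D * Max ((\<lambda>l. tsnorm (x l)) ` {1..m}))"

text \<open>Split the pointwise maximum according to which \<open>y j\<close> attains it.\<close>

lemma tsnorm_pointwise_Max_le:
  assumes D: "disjoint_sum_bound D" "0 \<le> D" and "1 \<le> k"
    and y: "\<And>j. j \<in> {1..k} \<Longrightarrow> in_Tstar (y j) \<and> tsnorm (y j) \<le> 1"
    and far: "\<And>j i. j \<in> {1..k} \<Longrightarrow> y j i \<noteq> 0 \<Longrightarrow> k \<le> i"
  shows "in_Tstar (\<lambda>i. Max ((\<lambda>j. y j i) ` {1..k}))
    \<and> tsnorm (\<lambda>i. Max ((\<lambda>j. y j i) ` {1..k})) \<le> D"
proof -
  define M where "M i = Max ((\<lambda>j. y j i) ` {1..k})" for i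
  have "\<exists>j\<in>{1..k}. y j i = M i" for i
  proof -
    have "M i \<in> (\<lambda>j. y j i) ` {1..k}"
      unfolding M_def using \<open>1 \<le> k\<close> by (intro Max_in) auto
    then show ?thesis by auto
  qed
  then obtain sg where sg: "\<And>i. sg i \<in> {1..k}" "\<And>i. y (sg i) i = M i"
    by metis
  define x where "x l = (\<lambda>i. if sg i = l then y l i else 0)" for l
  have x: "in_Tstar (x l) \<and> tsnorm (x l) \<le> 1" if l: "l \<in> {1..k}" for l
  proof -
    have "in_Tstar (x l) \<and> tsnorm (x l) \<le> tsnorm (y l)"
      using y[OF l] by (intro in_Tstar_abs_le) (auto simp: x_def in_Tstar_def)
    then show ?thesis using y[OF l] by linarith
  qed
  have M_eq: "M = (\<lambda>i. \<Sum>l=1..k. x l i)"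
    using sg by (simp add: x_def sum.delta' fun_eq_iff)
  have "tsnorm M \<le> D * Max ((\<lambda>l. tsnorm (x l)) ` {1..k})"
    unfolding M_eq
  proof (rule D(1)[unfolded disjoint_sum_bound_def, rule_format], intro conjI ballI impI)
    show "1 \<le> k" by fact
    show "in_Tstar (x l)" if "l \<in> {1..k}" for l using x[OF that] by simp
    show "supp (x l) \<inter> supp (x l') = {}" if "l \<noteq> l'" for l l'
      using that by (auto simp: supp_def x_def)
    show "k \<le> i" if "l \<in> {1..k}" "i \<in> supp (x l)" for l i
      using that far by (auto simp: supp_def x_def split: if_splits)
  qed
  also have "\<dots> \<le> D"
    using x \<open>1 \<le> k\<close> D(2) by (intro mult_left_le) auto
  finally show ?thesis
    using in_Tstar_sum[of "{1..k}" x] x unfolding M_eq M_def[symmetric] by auto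
qed

lemma ttnorm_le_componentwise:
  assumes w: "\<And>i. in_Tstar (w i) \<and> tsnorm (w i) \<le> C * M i"
    and "w 0 = (\<lambda>_. 0)" "in_Tstar M" "0 \<le> C"
  shows "ttnorm w \<le> C * tsnorm M"
proof -
  have "in_Tstar (\<lambda>i. C * M i) \<and> tsnorm (\<lambda>i. C * M i) \<le> C * tsnorm M"
    using in_Tstar_scale[OF \<open>in_Tstar M\<close>, of C] \<open>0 \<le> C\<close> by simp
  moreover have "\<bar>tsnorm (w i)\<bar> \<le> \<bar>C * M i\<bar>" for i
    using w[of i] tsnorm_nonneg by force
  ultimately show ?thesis
    unfolding ttnorm_def using in_Tstar_abs_le[of "\<lambda>i. C * M i" "\<lambda>i. tsnorm (w i)"]
      \<open>w 0 = (\<lambda>_. 0)\<close> tsnorm_zero by force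
qed

lemma tsnorm_component_combination_le:
  assumes inc: "\<And>j. j < k \<Longrightarrow> n j < n (Suc j)" and "1 \<le> k" "n 0 = k"
    and z: "\<And>j. j \<in> {1..k} \<Longrightarrow> z j \<in> projR (Rset k (n j) - Rset k (n (j - 1))) ` TTspace"
  shows "in_Tstar (\<lambda>s. \<Sum>j=1..k. a j * z j i s)
    \<and> tsnorm (\<lambda>s. \<Sum>j=1..k. a j * z j i s)
        \<le> 3 * Max ((\<lambda>j. \<bar>a j\<bar>) ` {1..k}) * Max ((\<lambda>j. tsnorm (z j i)) ` {1..k})"
proof -
  define P where "P j = {n (j - 1)<..n j}" for j
  have adm: "admissible (map P [1..<Suc k])"
    unfolding P_def by (rule admissible_intervals[where n = n]) (use assms in auto)
  obtain j0 where j0: "j0 \<in> {1..k}" "\<And>j. j \<in> {1..k} \<Longrightarrow> i \<in> P j \<Longrightarrow> j = j0"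
    using interval_index_unique[where n = n and k = k, OF inc \<open>1 \<le> k\<close>] unfolding P_def by blast
  show ?thesis
  proof (rule tsnorm_combination_blocks_le[OF adm j0(1)])
    fix j assume j: "j \<in> {1..k}"
    note zj = projR_Rset_diff[OF z[OF j], unfolded P_def[symmetric]]
    show "in_Tstar (z j i) \<and> tsnorm (z j i) \<le> Max ((\<lambda>j. tsnorm (z j i)) ` {1..k})"
      using zj(1) j by (auto simp: TTspace_def)
    show "supp (z j i) \<subseteq> P j" if "j \<noteq> j0"
      using zj(2) j0(2)[OF j] that by (auto simp: supp_def)
    show "\<bar>a j\<bar> \<le> Max ((\<lambda>j. \<bar>a j\<bar>) ` {1..k})"
      using j by auto
  qed
qed

lemma tsnorm_Max_component_norms_le:
  assumes "disjoint_sum_bound D" "0 \<le> D" "1 \<le> k"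
    and z: "\<And>j. j \<in> {1..k} \<Longrightarrow> z j \<in> projR (Rset k (n j) - Rset k (n (j - 1))) ` TTspace"
    and z_norm: "\<And>j. j \<in> {1..k} \<Longrightarrow> ttnorm (z j) \<le> 1"
  shows "in_Tstar (\<lambda>i. Max ((\<lambda>j. tsnorm (z j i)) ` {1..k}))
    \<and> tsnorm (\<lambda>i. Max ((\<lambda>j. tsnorm (z j i)) ` {1..k})) \<le> D"
proof (rule tsnorm_pointwise_Max_le[OF assms(1-3)])
  fix j assume j: "j \<in> {1..k}"
  note zj = projR_Rset_diff[OF z[OF j]]
  show "in_Tstar (\<lambda>i. tsnorm (z j i)) \<and> tsnorm (\<lambda>i. tsnorm (z j i)) \<le> 1"
    using zj(1) z_norm[OF j] by (simp add: TTspace_def ttnorm_def)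
  show "k \<le> i" if "tsnorm (z j i) \<noteq> 0" for i
  proof (rule ccontr)
    assume "\<not> k \<le> i"
    then have "z j i = (\<lambda>_. 0)" using zj(2) by fastforce
    then show False using that tsnorm_zero by simp
  qed
qed

theorem lemma4p11:
  fixes D :: real and k :: nat and n :: "nat \<Rightarrow> nat"
    and z :: "nat \<Rightarrow> nat \<Rightarrow> nat \<Rightarrow> real" and a :: "nat \<Rightarrow> real"
  assumes "D > 0"
    and "\<forall>(m::nat) (x::nat \<Rightarrow> nat \<Rightarrow> real).
           m \<ge> 1 \<and> (\<forall>l\<in>{1..m}. in_Tstar (x l))
           \<and> (\<forall>l\<in>{1..m}. \<forall>l'\<in>{1..m}. l \<noteq> l' \<longrightarrow> supp (x l) \<inter> supp (x l') = {})
           \<and> (\<forall>l\<in>{1..m}. \<forall>i\<in>supp (x l). m \<le> i)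
           \<longrightarrow> tsnorm (\<lambda>i. \<Sum>l=1..m. x l i) \<le> D * Max ((\<lambda>l. tsnorm (x l)) ` {1..m})"
    and "k \<ge> 1" and "n 0 = k" and "\<forall>j<k. n j < n (Suc j)"
    and "\<forall>j\<in>{1..k}. z j \<in> projR (Rset k (n j) - Rset k (n (j - 1))) ` TTspace
                      \<and> ttnorm (z j) \<le> 1"
  shows "ttnorm (\<lambda>i s. \<Sum>j=1..k. a j * z j i s) \<le> 3 * D * Max ((\<lambda>j. \<bar>a j\<bar>) ` {1..k})"
proof -
  define A where "A = Max ((\<lambda>j. \<bar>a j\<bar>) ` {1..k})"
  define M where "M i = Max ((\<lambda>j. tsnorm (z j i)) ` {1..k})" for i
  have A: "0 \<le> A"
    unfolding A_def using assms(3) by (intro order_trans[OF abs_ge_zero Max_ge[of _ "\<bar>a 1\<bar>"]]) auto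
  have M: "in_Tstar M \<and> tsnorm M \<le> D"
    unfolding M_def
  proof (rule tsnorm_Max_component_norms_le[where n = n])
    show "disjoint_sum_bound D"
      using assms(2) unfolding disjoint_sum_bound_def .
  qed (use assms(1,3,6) in auto)
  have "ttnorm (\<lambda>i s. \<Sum>j=1..k. a j * z j i s) \<le> 3 * A * tsnorm M"
  proof (rule ttnorm_le_componentwise)
    show "in_Tstar (\<lambda>s. \<Sum>j=1..k. a j * z j i s) \<and> tsnorm (\<lambda>s. \<Sum>j=1..k. a j * z j i s) \<le> 3 * A * M i"
      for i unfolding A_def M_def
      by (rule tsnorm_component_combination_le[where n = n]) (use assms(3-6) in auto)
    have "z j \<in> TTspace" if "j \<in> {1..k}" for j
      by (rule projR_Rset_diff(1)) (use assms(6) that in blast)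
    then show "(\<lambda>s. \<Sum>j=1..k. a j * z j 0 s) = (\<lambda>_. 0)"
      by (simp add: TTspace_def)
    show "in_Tstar M" using M ..
    show "0 \<le> 3 * A" using A by simp
  qed
  also have "\<dots> \<le> 3 * D * A"
    using M A by (simp add: mult_left_mono mult.commute)
  finally show ?thesis unfolding A_def .
qed

end
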